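(* Let $G=\mathbb Z$ with the discrete topology, $Y=(0,\infty)$, and $\theta$ the partial action with $Y_n=(\max\{0,n\},\infty)$ and $\theta_n(y)=n+y$ for $y\in Y_{-n}$. Let $X$ be a compact space and $\hat\theta$ the induced partial action on $C(X,Y)$, i.e. $C(X,Y)_n=\{f: f(x)>\max\{0,n\}\text{ for all }x\in X\}$ and $\hat\theta_n(f)=\theta_n\circ f=f+n$. Then the enveloping space $C(X,Y)_G$ of $\hat\theta$ is $G$-homeomorphic to $C(X,\mathbb R)$ (compact-open topology) with the global action $(n,F)\mapsto F+n$.
   Context: $C(X,Y)$ has the compact-open topology. The enveloping space is $C(X,Y)_G=(G\times C(X,Y))/R$ with the quotient topology, where $(n,f)R(m,g)$ iff $f\in C(X,Y)_{m-n}$ and $\hat\theta_{n-m}(f)=g$, with global action $k\cdot[n,f]=[k+n,f]$. A $G$-homeomorphism is a homeomorphism commuting with the actions. *)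

theory Defs
  imports "HOL-Analysis.Analysis" "HOL-Library.FuncSet"
begin

text \<open>C(X,Y): continuous maps X \<rightarrow> Y, represented extensionally
  (value undefined outside topspace X).\<close>
definition cmap_space :: "'a topology \<Rightarrow> 'b topology \<Rightarrow> ('a \<Rightarrow> 'b) set" where
  "cmap_space X Y = {f. continuous_map X Y f \<and> f \<in> extensional (topspace X)}"

definition compact_open :: "'a topology \<Rightarrow> 'b topology \<Rightarrow> ('a \<Rightarrow> 'b) topology" where
  "compact_open X Y =
     subtopology
       (topology_generated_by {{f. f ` K \<subseteq> U} | K U. compactin X K \<and> openin Y U})
       (cmap_space X Y)"

definition quotient_topology :: "'a topology \<Rightarrow> ('a \<Rightarrow> 'b) \<Rightarrow> 'b topology" where
  "quotient_topology T q =
     topology (\<lambda>U. U \<subseteq> q ` topspace T \<and> openin T {x \<in> topspace T. q x \<in> U})"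

text \<open>A partial action of \<int> on a space Z is given by domains D n (the set Z_n)
  and maps \<phi> n : D (-n) \<rightarrow> D n.\<close>
definition env_rel :: "(int \<Rightarrow> 'b set) \<Rightarrow> (int \<Rightarrow> 'b \<Rightarrow> 'b) \<Rightarrow> ((int \<times> 'b) \<times> (int \<times> 'b)) set" where
  "env_rel D \<phi> = {((n, f), (m, g)). f \<in> D (m - n) \<and> \<phi> (n - m) f = g}"

definition env_space :: "'b topology \<Rightarrow> (int \<Rightarrow> 'b set) \<Rightarrow> (int \<Rightarrow> 'b \<Rightarrow> 'b) \<Rightarrow> (int \<times> 'b) set topology" where
  "env_space Z D \<phi> =
     quotient_topology (prod_topology (discrete_topology (UNIV :: int set)) Z)
                       (\<lambda>p. env_rel D \<phi> `` {p})"

definition env_act :: "int \<Rightarrow> (int \<times> 'b) set \<Rightarrow> (int \<times> 'b) set" where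
  "env_act k c = (\<lambda>(n, f). (k + n, f)) ` c"

definition Ypos :: "real topology" where
  "Ypos = subtopology euclideanreal {0<..}"

definition CXY_dom :: "'a topology \<Rightarrow> int \<Rightarrow> ('a \<Rightarrow> real) set" where
  "CXY_dom X n = {f \<in> cmap_space X Ypos. \<forall>x \<in> topspace X. f x > max 0 (real_of_int n)}"

definition shift_fun :: "'a topology \<Rightarrow> int \<Rightarrow> ('a \<Rightarrow> real) \<Rightarrow> ('a \<Rightarrow> real)" where
  "shift_fun X n f = restrict (\<lambda>x. f x + real_of_int n) (topspace X)"

end

(*
  Write \<Phi> (n, f) = f + n for n \<in> \<int> and f \<in> C(X, (0, \<infinity>)).  Two pairs are R-related exactly
  when they have the same image under \<Phi>, so the enveloping space is the quotient of
  \<int> \<times> C(X, (0, \<infinity>)) by the fibres of \<Phi>.  Moreover \<Phi> is a quotient map onto C(X, \<real>): on the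
  slice {n} \<times> C(X, (0, \<infinity>)) it is a homeomorphism onto C(X, (n, \<infinity>)), which is open in the
  compact-open topology because X is compact, and every continuous real function on the
  compact space X lies in some C(X, (n, \<infinity>)).  Hence \<Phi> induces a homeomorphism from the
  enveloping space onto C(X, \<real>); it is equivariant since \<Phi> (k + n, f) = \<Phi> (n, f) + k.
*)
theory Submission
  imports Defs
begin

section \<open>Quotient topologies\<close>

lemma openin_quotient_topology:
  "openin (quotient_topology T q) U \<longleftrightarrow>
     U \<subseteq> q ` topspace T \<and> openin T {x \<in> topspace T. q x \<in> U}"
proof -
  have "istopology (\<lambda>U. U \<subseteq> q ` topspace T \<and> openin T {x \<in> topspace T. q x \<in> U})"
    unfolding istopology_def
  proof (intro conjI allI impI)
    fix S U
    assume "S \<subseteq> q ` topspace T \<and> openin T {x \<in> topspace T. q x \<in> S}"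
      and "U \<subseteq> q ` topspace T \<and> openin T {x \<in> topspace T. q x \<in> U}"
    moreover have "{x \<in> topspace T. q x \<in> S \<inter> U} =
        {x \<in> topspace T. q x \<in> S} \<inter> {x \<in> topspace T. q x \<in> U}" by auto
    ultimately show "S \<inter> U \<subseteq> q ` topspace T" "openin T {x \<in> topspace T. q x \<in> S \<inter> U}"
      by auto
  next
    fix \<K> assume \<K>: "\<forall>S\<in>\<K>. S \<subseteq> q ` topspace T \<and> openin T {x \<in> topspace T. q x \<in> S}"
    have "{x \<in> topspace T. q x \<in> \<Union>\<K>} = (\<Union>S\<in>\<K>. {x \<in> topspace T. q x \<in> S})" by auto
    moreover have "openin T (\<Union>S\<in>\<K>. {x \<in> topspace T. q x \<in> S})"
      using \<K> by (intro openin_Union) auto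
    ultimately show "\<Union>\<K> \<subseteq> q ` topspace T" "openin T {x \<in> topspace T. q x \<in> \<Union>\<K>}"
      using \<K> by auto
  qed
  then show ?thesis
    by (simp add: quotient_topology_def topology_inverse')
qed

lemma topspace_quotient_topology: "topspace (quotient_topology T q) = q ` topspace T"
proof (rule subset_antisym)
  show "topspace (quotient_topology T q) \<subseteq> q ` topspace T"
    using openin_topspace[of "quotient_topology T q"] unfolding openin_quotient_topology by blast
  have "{x \<in> topspace T. q x \<in> q ` topspace T} = topspace T" by blast
  then have "openin (quotient_topology T q) (q ` topspace T)"
    unfolding openin_quotient_topology by simp
  then show "q ` topspace T \<subseteq> topspace (quotient_topology T q)"
    by (rule openin_subset)
qed

lemma quotient_map_quotient_topology: "quotient_map T (quotient_topology T q) q"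
  unfolding quotient_map_def topspace_quotient_topology openin_quotient_topology by blast

lemma homeomorphic_map_quotient_topology:
  assumes \<Phi>: "quotient_map T C \<Phi>"
    and fibres: "\<And>x y. x \<in> topspace T \<Longrightarrow> y \<in> topspace T \<Longrightarrow> q x = q y \<longleftrightarrow> \<Phi> x = \<Phi> y"
  obtains h where "homeomorphic_map (quotient_topology T q) C h"
    and "\<And>x. x \<in> topspace T \<Longrightarrow> h (q x) = \<Phi> x"
proof -
  have q: "quotient_map T (quotient_topology T q) q"
    by (rule quotient_map_quotient_topology)
  obtain h where h: "continuous_map (quotient_topology T q) C h"
    and hq: "\<And>x. x \<in> topspace T \<Longrightarrow> h (q x) = \<Phi> x"
    using quotient_map_lift_exists[OF q quotient_imp_continuous_map[OF \<Phi>]] fibres by metis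
  obtain g where g: "continuous_map C (quotient_topology T q) g"
    and g\<Phi>: "\<And>x. x \<in> topspace T \<Longrightarrow> g (\<Phi> x) = q x"
    using quotient_map_lift_exists[OF \<Phi> quotient_imp_continuous_map[OF q]] fibres by metis
  have "homeomorphic_maps (quotient_topology T q) C h g"
    unfolding homeomorphic_maps_def
  proof (intro conjI ballI h g)
    fix c assume "c \<in> topspace (quotient_topology T q)"
    then obtain x where "x \<in> topspace T" "c = q x"
      using quotient_imp_surjective_map[OF q] by blast
    then show "g (h c) = c" by (simp add: hq g\<Phi>)
  next
    fix F assume "F \<in> topspace C"
    then obtain x where "x \<in> topspace T" "F = \<Phi> x"
      using quotient_imp_surjective_map[OF \<Phi>] by blast
    then show "h (g F) = F" by (simp add: hq g\<Phi>)
  qed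
  then show ?thesis
    using homeomorphic_map_maps hq that by blast
qed

section \<open>The compact-open topology\<close>

lemma topspace_compact_open: "topspace (compact_open X Y) = cmap_space X Y"
proof -
  have "UNIV \<in> {{f. f ` K \<subseteq> U} | K U. compactin X K \<and> openin Y U}"
    by (rule CollectI, rule exI[of _ "{}"], rule exI[of _ "topspace Y"]) auto
  then show ?thesis unfolding compact_open_def by auto
qed

lemma openin_compact_open_subbasic:
  assumes "compactin X K" "openin Y U"
  shows "openin (compact_open X Y) {f \<in> cmap_space X Y. f ` K \<subseteq> U}"
proof -
  have "openin (topology_generated_by {{f. f ` K \<subseteq> U} | K U. compactin X K \<and> openin Y U})
          {f. f ` K \<subseteq> U}"
    using assms by (intro topology_generated_by_Basis) blast
  moreover have "{f \<in> cmap_space X Y. f ` K \<subseteq> U} = {f. f ` K \<subseteq> U} \<inter> cmap_space X Y" by auto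
  ultimately show ?thesis unfolding compact_open_def openin_subtopology by blast
qed

lemma continuous_map_into_compact_open:
  assumes "\<phi> ` topspace Z \<subseteq> cmap_space X Y"
    and "\<And>K U. compactin X K \<Longrightarrow> openin Y U \<Longrightarrow> openin Z {z \<in> topspace Z. \<phi> z ` K \<subseteq> U}"
  shows "continuous_map Z (compact_open X Y) \<phi>"
proof -
  let ?S = "{{f. f ` K \<subseteq> U} | K U. compactin X K \<and> openin Y U}"
  have "continuous_map Z (topology_generated_by ?S) \<phi>"
  proof (rule continuous_on_generated_topo)
    fix S assume "S \<in> ?S"
    then obtain K U where "S = {f. f ` K \<subseteq> U}" "compactin X K" "openin Y U" by blast
    moreover have "\<phi> -` {f. f ` K \<subseteq> U} \<inter> topspace Z = {z \<in> topspace Z. \<phi> z ` K \<subseteq> U}" by auto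
    ultimately show "openin Z (\<phi> -` S \<inter> topspace Z)" using assms(2) by auto
  next
    have "UNIV \<in> ?S"
      by (rule CollectI, rule exI[of _ "{}"], rule exI[of _ "topspace Y"]) auto
    then show "\<phi> ` topspace Z \<subseteq> \<Union> ?S" by auto
  qed
  then show ?thesis
    unfolding compact_open_def continuous_map_in_subtopology using assms(1) by auto
qed

lemma cmap_space_subtopology:
  "cmap_space X (subtopology Y S) = {f \<in> cmap_space X Y. f ` topspace X \<subseteq> S}"
  by (auto simp: cmap_space_def continuous_map_in_subtopology)

lemma continuous_map_compact_open_compose:
  assumes g: "continuous_map Y Y' g"
  shows "continuous_map (compact_open X Y) (compact_open X Y') (\<lambda>f. restrict (g \<circ> f) (topspace X))"
proof (rule continuous_map_into_compact_open)
  show "(\<lambda>f. restrict (g \<circ> f) (topspace X)) ` topspace (compact_open X Y) \<subseteq> cmap_space X Y'"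
  proof (clarsimp simp: topspace_compact_open)
    fix f assume "f \<in> cmap_space X Y"
    then have "continuous_map X Y' (g \<circ> f)"
      using g by (auto simp: cmap_space_def intro: continuous_map_compose)
    then show "restrict (g \<circ> f) (topspace X) \<in> cmap_space X Y'"
      by (auto simp: cmap_space_def elim: continuous_map_eq)
  qed
next
  fix K U assume K: "compactin X K" and U: "openin Y' U"
  have KX: "K \<subseteq> topspace X"
    using K by (rule compactin_subset_topspace)
  then have "f ` K \<subseteq> topspace Y" if "f \<in> cmap_space X Y" for f
    using that by (auto simp: cmap_space_def dest!: continuous_map_image_subset_topspace)
  with KX have "{f \<in> topspace (compact_open X Y). restrict (g \<circ> f) (topspace X) ` K \<subseteq> U}
      = {f \<in> cmap_space X Y. f ` K \<subseteq> {y \<in> topspace Y. g y \<in> U}}"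
    by (auto simp: topspace_compact_open Int_absorb2)
  moreover have "openin Y {y \<in> topspace Y. g y \<in> U}"
    using g U by (rule openin_continuous_map_preimage)
  ultimately show "openin (compact_open X Y)
      {f \<in> topspace (compact_open X Y). restrict (g \<circ> f) (topspace X) ` K \<subseteq> U}"
    using openin_compact_open_subbasic[OF K] by simp
qed

lemma homeomorphic_maps_compact_open:
  assumes "homeomorphic_maps Y Y' g g'"
  shows "homeomorphic_maps (compact_open X Y) (compact_open X Y')
           (\<lambda>f. restrict (g \<circ> f) (topspace X)) (\<lambda>f. restrict (g' \<circ> f) (topspace X))"
proof -
  have inverse: "restrict (g' \<circ> restrict (g \<circ> f) (topspace X)) (topspace X) = f"
    if "homeomorphic_maps Y Y' g g'" "f \<in> cmap_space X Y" for g g' Y Y' f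
    using that continuous_map_image_subset_topspace[of X Y f]
    by (fastforce simp: homeomorphic_maps_def cmap_space_def extensional_def fun_eq_iff)
  show ?thesis
    using assms inverse[OF assms] inverse[OF homeomorphic_maps_sym[THEN iffD1, OF assms]]
    by (auto simp: homeomorphic_maps_def topspace_compact_open continuous_map_compact_open_compose)
qed

lemma compact_open_subtopology:
  "compact_open X (subtopology Y S) = subtopology (compact_open X Y) (cmap_space X (subtopology Y S))"
proof -
  let ?CS = "cmap_space X (subtopology Y S)"
  have top: "topspace (subtopology (compact_open X Y) ?CS) = ?CS"
    by (auto simp: topspace_compact_open cmap_space_subtopology)
  have "continuous_map (compact_open X (subtopology Y S)) (compact_open X Y)
          (\<lambda>f. restrict (id \<circ> f) (topspace X))"
    by (rule continuous_map_compact_open_compose) (simp add: continuous_map_from_subtopology)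
  then have "continuous_map (compact_open X (subtopology Y S)) (compact_open X Y) id"
    by (rule continuous_map_eq) (auto simp: topspace_compact_open cmap_space_def extensional_restrict)
  then have to_sub: "continuous_map (compact_open X (subtopology Y S)) (subtopology (compact_open X Y) ?CS) id"
    by (simp add: continuous_map_in_subtopology topspace_compact_open)
  have from_sub: "continuous_map (subtopology (compact_open X Y) ?CS) (compact_open X (subtopology Y S)) id"
  proof (rule continuous_map_into_compact_open)
    fix K V assume K: "compactin X K" and "openin (subtopology Y S) V"
    then obtain U where U: "openin Y U" and V: "V = U \<inter> S"
      by (auto simp: openin_subtopology)
    have "{f \<in> topspace (subtopology (compact_open X Y) ?CS). id f ` K \<subseteq> V}
        = ?CS \<inter> {f \<in> cmap_space X Y. f ` K \<subseteq> U}"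
      using compactin_subset_topspace[OF K] by (auto simp: top V cmap_space_subtopology topspace_compact_open)
    then show "openin (subtopology (compact_open X Y) ?CS)
        {f \<in> topspace (subtopology (compact_open X Y) ?CS). id f ` K \<subseteq> V}"
      using openin_compact_open_subbasic[OF K U] by (simp add: openin_subtopology_Int2)
  qed (simp add: top)
  have "homeomorphic_map (compact_open X (subtopology Y S)) (subtopology (compact_open X Y) ?CS) id"
    using to_sub from_sub by (auto simp: homeomorphic_map_maps homeomorphic_maps_def)
  then show ?thesis by simp
qed

lemma openin_compact_open_cmap_space_subtopology:
  assumes "compact_space X" "openin Y S"
  shows "openin (compact_open X Y) (cmap_space X (subtopology Y S))"
  using openin_compact_open_subbasic[of X "topspace X" Y S] assms
  by (simp add: compact_space_def cmap_space_subtopology)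

section \<open>Products with a discrete space\<close>

lemma continuous_map_prod_discrete:
  fixes \<phi> :: "'i \<Rightarrow> 'b \<Rightarrow> 'c"
  assumes "\<And>n. continuous_map Z Y (\<phi> n)"
  shows "continuous_map (prod_topology (discrete_topology UNIV) Z) Y (\<lambda>(n, z). \<phi> n z)"
  unfolding continuous_map_def
proof (intro conjI allI impI)
  show "(\<lambda>(n, z). \<phi> n z) \<in> topspace (prod_topology (discrete_topology UNIV) Z) \<rightarrow> topspace Y"
    using assms by (auto dest: continuous_map_funspace)
  fix V assume V: "openin Y V"
  have "{p \<in> topspace (prod_topology (discrete_topology UNIV) Z). (case p of (n, z) \<Rightarrow> \<phi> n z) \<in> V}
      = (\<Union>n. {n} \<times> {z \<in> topspace Z. \<phi> n z \<in> V})" by auto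
  moreover have "openin (prod_topology (discrete_topology UNIV) Z) (\<Union>n. {n} \<times> {z \<in> topspace Z. \<phi> n z \<in> V})"
    using assms V by (intro openin_Union) (auto simp: openin_prod_Times_iff continuous_map_def)
  ultimately show "openin (prod_topology (discrete_topology UNIV) Z)
      {p \<in> topspace (prod_topology (discrete_topology UNIV) Z). (case p of (n, z) \<Rightarrow> \<phi> n z) \<in> V}"
    by simp
qed

lemma open_map_prod_discrete:
  fixes \<phi> :: "'i \<Rightarrow> 'b \<Rightarrow> 'c"
  assumes "\<And>n. open_map Z Y (\<phi> n)"
  shows "open_map (prod_topology (discrete_topology UNIV) Z) Y (\<lambda>(n, z). \<phi> n z)"
  unfolding open_map_def
proof (intro allI impI)
  fix W :: "('i \<times> 'b) set"
  assume W: "openin (prod_topology (discrete_topology UNIV) Z) W"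
  have "openin Z {z \<in> topspace Z. (n, z) \<in> W}" for n :: 'i
  proof -
    have "continuous_map Z (prod_topology (discrete_topology UNIV) Z) (\<lambda>z. (n, z))"
      by (simp add: continuous_map_paired)
    then show ?thesis
      using W by (rule openin_continuous_map_preimage)
  qed
  then have "openin Y (\<Union>n. \<phi> n ` {z \<in> topspace Z. (n, z) \<in> W})"
    using assms by (intro openin_Union) (auto simp: open_map_def)
  moreover have "(\<lambda>(n, z). \<phi> n z) ` W = (\<Union>n. \<phi> n ` {z \<in> topspace Z. (n, z) \<in> W})"
    using openin_subset[OF W] by force
  ultimately show "openin Y ((\<lambda>(n, z). \<phi> n z) ` W)"
    by simp
qed

section \<open>The enveloping space of the translation action on C(X, (0, \<infinity>))\<close>

lemma env_act_Image:
  "env_act k (env_rel D \<phi> `` {(n, f)}) = env_rel D \<phi> `` {(k + n, f)}"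
proof -
  have "(\<lambda>(m, g). (k + m, g)) ` {(m, g). f \<in> D (m - n) \<and> \<phi> (n - m) f = g}
      = {(m, g). f \<in> D (m - (k + n)) \<and> \<phi> (k + n - m) f = g}" (is "?L = ?R")
  proof
    show "?R \<subseteq> ?L"
    proof
      fix p assume "p \<in> ?R"
      then obtain m g where p: "p = (m, g)" and "f \<in> D (m - (k + n))" "\<phi> (k + n - m) f = g"
        by blast
      then have "(m - k, g) \<in> {(m, g). f \<in> D (m - n) \<and> \<phi> (n - m) f = g}"
        by (simp add: algebra_simps)
      then show "p \<in> ?L"
        unfolding p by (rule rev_image_eqI) simp
    qed
  qed (auto simp: algebra_simps)
  then show ?thesis
    by (simp add: env_act_def env_rel_def Image_def)
qed

lemma shift_fun_add: "shift_fun X k (shift_fun X j f) = shift_fun X (k + j) f"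
  by (auto simp: shift_fun_def fun_eq_iff)

lemma shift_fun_0: "f \<in> extensional (topspace X) \<Longrightarrow> shift_fun X 0 f = f"
  by (simp add: shift_fun_def extensional_restrict)

lemma cmap_space_Ypos:
  "cmap_space X Ypos = {f \<in> cmap_space X euclideanreal. \<forall>x \<in> topspace X. f x > 0}"
  by (auto simp: Ypos_def cmap_space_subtopology)

lemma homeomorphic_maps_translate_greaterThan:
  "homeomorphic_maps (subtopology euclideanreal {a<..}) (subtopology euclideanreal {a + c<..})
     (\<lambda>y. y + c) (\<lambda>y. y - c)"
  by (auto simp: homeomorphic_maps_def continuous_map_in_subtopology
      intro!: continuous_map_from_subtopology continuous_intros)

lemma homeomorphic_map_shift_fun:
  "homeomorphic_map (compact_open X Ypos)
     (subtopology (compact_open X euclideanreal) (cmap_space X (subtopology euclideanreal {real_of_int n<..})))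
     (shift_fun X n)"
proof -
  have "homeomorphic_maps Ypos (subtopology euclideanreal {real_of_int n<..})
          (\<lambda>y. y + real_of_int n) (\<lambda>y. y - real_of_int n)"
    using homeomorphic_maps_translate_greaterThan[of 0 "real_of_int n"] by (simp add: Ypos_def)
  then have "homeomorphic_map (compact_open X Ypos) (compact_open X (subtopology euclideanreal {real_of_int n<..}))
          (\<lambda>f. restrict ((\<lambda>y. y + real_of_int n) \<circ> f) (topspace X))"
    using homeomorphic_map_maps homeomorphic_maps_compact_open by blast
  moreover have "(\<lambda>f. restrict ((\<lambda>y. y + real_of_int n) \<circ> f) (topspace X)) = shift_fun X n"
    by (simp add: shift_fun_def o_def fun_eq_iff)
  ultimately show ?thesis
    by (simp add: compact_open_subtopology)
qed

lemma cmap_space_real_bounded_below: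
  assumes "compact_space X" "F \<in> cmap_space X euclideanreal"
  obtains n :: int where "F \<in> cmap_space X (subtopology euclideanreal {real_of_int n<..})"
proof -
  have "compactin euclideanreal (F ` topspace X)"
    using assms by (intro image_compactin) (auto simp: compact_space_def cmap_space_def)
  then have "bdd_below (F ` topspace X)"
    by (simp add: bounded_imp_bdd_below compact_imp_bounded)
  then obtain B where B: "\<And>x. x \<in> topspace X \<Longrightarrow> B \<le> F x"
    by (auto simp: bdd_below_def)
  have "F ` topspace X \<subseteq> {real_of_int (\<lfloor>B\<rfloor> - 1)<..}"
  proof clarify
    fix x assume "x \<in> topspace X"
    then show "real_of_int (\<lfloor>B\<rfloor> - 1) < F x"
      using B[of x] of_int_floor_le[of B] by linarith
  qed
  then show ?thesis
    using that[of "\<lfloor>B\<rfloor> - 1"] assms(2) by (simp add: cmap_space_subtopology)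
qed

lemma quotient_map_shift_fun:
  assumes "compact_space X"
  shows "quotient_map (prod_topology (discrete_topology UNIV) (compact_open X Ypos)) (compact_open X euclideanreal)
           (\<lambda>(n, f). shift_fun X n f)"
proof (rule continuous_open_imp_quotient_map)
  let ?W = "\<lambda>n. cmap_space X (subtopology euclideanreal {real_of_int n<..})"
  have W_open: "openin (compact_open X euclideanreal) (?W n)" for n
    using assms by (simp add: openin_compact_open_cmap_space_subtopology)
  have W_top: "topspace (subtopology (compact_open X euclideanreal) (?W n)) = ?W n" for n
    by (auto simp: topspace_compact_open cmap_space_subtopology)
  show "continuous_map (prod_topology (discrete_topology UNIV) (compact_open X Ypos)) (compact_open X euclideanreal)
          (\<lambda>(n, f). shift_fun X n f)"
  proof (rule continuous_map_prod_discrete)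
    fix n
    show "continuous_map (compact_open X Ypos) (compact_open X euclideanreal) (shift_fun X n)"
      using homeomorphic_imp_continuous_map[OF homeomorphic_map_shift_fun[of X n]]
      by (simp add: continuous_map_in_subtopology)
  qed
  show "open_map (prod_topology (discrete_topology UNIV) (compact_open X Ypos)) (compact_open X euclideanreal)
          (\<lambda>(n, f). shift_fun X n f)"
  proof (rule open_map_prod_discrete)
    fix n
    show "open_map (compact_open X Ypos) (compact_open X euclideanreal) (shift_fun X n)"
      using homeomorphic_imp_open_map[OF homeomorphic_map_shift_fun[of X n]]
      by (simp add: open_map_in_subtopology[OF W_open])
  qed
  have "(\<lambda>(n, f). shift_fun X n f) ` (UNIV \<times> cmap_space X Ypos) = (\<Union>n. shift_fun X n ` cmap_space X Ypos)"
    by auto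
  also have "\<dots> = (\<Union>n. ?W n)"
  proof -
    have "shift_fun X n ` cmap_space X Ypos = ?W n" for n
      using homeomorphic_imp_surjective_map[OF homeomorphic_map_shift_fun[of X n]]
      by (simp only: W_top topspace_compact_open)
    then show ?thesis by simp
  qed
  also have "\<dots> = cmap_space X euclideanreal"
  proof
    show "(\<Union>n. ?W n) \<subseteq> cmap_space X euclideanreal"
      by (auto simp: cmap_space_subtopology)
    show "cmap_space X euclideanreal \<subseteq> (\<Union>n. ?W n)"
      using cmap_space_real_bounded_below[OF assms] by blast
  qed
  finally show "(\<lambda>(n, f). shift_fun X n f) ` topspace (prod_topology (discrete_topology UNIV) (compact_open X Ypos))
      = topspace (compact_open X euclideanreal)"
    by (simp add: topspace_compact_open)
qed

lemma env_rel_CXY_iff: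
  assumes f: "f \<in> cmap_space X Ypos"
  shows "((n, f), (m, g)) \<in> env_rel (CXY_dom X) (shift_fun X) \<longleftrightarrow>
           g \<in> cmap_space X Ypos \<and> shift_fun X m g = shift_fun X n f"
proof
  assume "((n, f), (m, g)) \<in> env_rel (CXY_dom X) (shift_fun X)"
  then have fD: "f \<in> CXY_dom X (m - n)" and g: "g = shift_fun X (n - m) f"
    by (auto simp: env_rel_def)
  have "continuous_map X euclideanreal f"
    using f unfolding cmap_space_Ypos by (simp add: cmap_space_def)
  then have "continuous_map X euclideanreal (\<lambda>x. f x + real_of_int (n - m))"
    by (intro continuous_map_add) auto
  then have "g \<in> cmap_space X euclideanreal"
    by (auto simp: g shift_fun_def cmap_space_def elim: continuous_map_eq)
  moreover have "\<forall>x \<in> topspace X. g x > 0"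
    using fD by (auto simp: g CXY_dom_def shift_fun_def)
  moreover have "shift_fun X m g = shift_fun X n f"
    by (simp add: g shift_fun_add)
  ultimately show "g \<in> cmap_space X Ypos \<and> shift_fun X m g = shift_fun X n f"
    by (simp add: cmap_space_Ypos)
next
  assume "g \<in> cmap_space X Ypos \<and> shift_fun X m g = shift_fun X n f"
  then have g: "g \<in> cmap_space X Ypos" and eq: "shift_fun X m g = shift_fun X n f"
    by auto
  have "f x > max 0 (real_of_int (m - n))" if x: "x \<in> topspace X" for x
  proof -
    have "g x + m = f x + n"
      using fun_cong[OF eq, of x] x by (simp add: shift_fun_def)
    moreover have "g x > 0" "f x > 0"
      using g f x by (auto simp: cmap_space_Ypos)
    ultimately show ?thesis by auto
  qed
  then have "f \<in> CXY_dom X (m - n)"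
    using f by (simp add: CXY_dom_def)
  moreover have "shift_fun X (n - m) f = g"
  proof -
    have "shift_fun X (n - m) f = shift_fun X (-m) (shift_fun X m g)"
      by (simp add: eq shift_fun_add)
    also have "\<dots> = g"
      using g by (simp add: shift_fun_add shift_fun_0 cmap_space_def)
    finally show ?thesis .
  qed
  ultimately show "((n, f), (m, g)) \<in> env_rel (CXY_dom X) (shift_fun X)"
    by (simp add: env_rel_def)
qed

lemma env_rel_CXY_Image_eq_iff:
  assumes "f \<in> cmap_space X Ypos" "g \<in> cmap_space X Ypos"
  shows "env_rel (CXY_dom X) (shift_fun X) `` {(n, f)} = env_rel (CXY_dom X) (shift_fun X) `` {(m, g)}
           \<longleftrightarrow> shift_fun X n f = shift_fun X m g"
proof
  assume "env_rel (CXY_dom X) (shift_fun X) `` {(n, f)} = env_rel (CXY_dom X) (shift_fun X) `` {(m, g)}"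
  moreover have "(m, g) \<in> env_rel (CXY_dom X) (shift_fun X) `` {(m, g)}"
    using env_rel_CXY_iff[OF assms(2)] assms(2) by simp
  ultimately have "((n, f), (m, g)) \<in> env_rel (CXY_dom X) (shift_fun X)"
    by (metis Image_singleton_iff)
  then show "shift_fun X n f = shift_fun X m g"
    using env_rel_CXY_iff[OF assms(1)] by simp
qed (simp add: set_eq_iff split_paired_All env_rel_CXY_iff assms)

theorem theorem3p13:
  fixes X :: "'a topology"
  assumes "compact_space X"
  shows "\<exists>h. homeomorphic_map
               (env_space (compact_open X Ypos) (CXY_dom X) (shift_fun X))
               (compact_open X euclideanreal) h
           \<and> (\<forall>k c. c \<in> topspace (env_space (compact_open X Ypos) (CXY_dom X) (shift_fun X))
                 \<longrightarrow> h (env_act k c) = shift_fun X k (h c))"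
proof -
  let ?T = "prod_topology (discrete_topology (UNIV :: int set)) (compact_open X Ypos)"
  let ?q = "\<lambda>p. env_rel (CXY_dom X) (shift_fun X) `` {p}"
  have top: "topspace ?T = UNIV \<times> cmap_space X Ypos"
    by (simp add: topspace_compact_open)
  obtain h where hom: "homeomorphic_map (quotient_topology ?T ?q) (compact_open X euclideanreal) h"
    and hq: "\<And>p. p \<in> topspace ?T \<Longrightarrow> h (?q p) = (case p of (n, f) \<Rightarrow> shift_fun X n f)"
  proof (rule homeomorphic_map_quotient_topology[OF quotient_map_shift_fun[OF assms]])
    show "?q p = ?q p' \<longleftrightarrow> (case p of (n, f) \<Rightarrow> shift_fun X n f) = (case p' of (n, f) \<Rightarrow> shift_fun X n f)"
      if "p \<in> topspace ?T" "p' \<in> topspace ?T" for p p'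
      using that by (clarsimp simp: topspace_compact_open env_rel_CXY_Image_eq_iff)
  qed (rule that)
  have "h (env_act k c) = shift_fun X k (h c)" if c: "c \<in> topspace (quotient_topology ?T ?q)" for k c
  proof -
    obtain n f where c: "c = ?q (n, f)" and f: "f \<in> cmap_space X Ypos"
      using c unfolding topspace_quotient_topology top by blast
    then show ?thesis
      using hq[of "(n, f)"] hq[of "(k + n, f)"] by (simp add: topspace_compact_open env_act_Image shift_fun_add)
  qed
  with hom show ?thesis
    by (auto simp: env_space_def)
qed

end
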